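(* Let $\mathbf{A}\in\mathbb{R}^{m\times n}$ have all rows nonzero, let $b\in\mathcal{R}(\mathbf{A})$, and let $f:\mathbb{R}^n\to\mathbb{R}$ be finite everywhere and $1$-strongly convex, with $\hat x$ the unique solution of $\min_x f(x)$ subject to $\mathbf{A}x=b$. Fix a partition of the rows into $M$ blocks. Consider the block accelerated randomized Bregman–Kaczmarz method (ARBK): $z^0=y^0=0\in\mathbb{R}^m$, $\theta_0=1/M$, and for $k\ge0$: $v^k=(1-\theta_k)y^k+\theta_k z^k$; choose $i=i_k\in[M]$ uniformly at random, independently of the past; $$z^{k+1}=z^k-\frac{1}{M\theta_k}\,\frac{\mathbf{U}_i\big(\mathbf{A}_{(i)}\nabla f^*(\mathbf{A}^\top v^k)-b_{(i)}\big)}{\|\mathbf{A}_{(i)}\|_2^2},\quad y^{k+1}=v^k+M\theta_k(z^{k+1}-z^k),\quad \theta_{k+1}=\frac{\sqrt{\theta_k^4+4\theta_k^2}-\theta_k^2}{2},$$ and set $d^k=\mathbf{A}^\top y^k$, $x^k=\nabla f^*(d^k)$. Let $\hat y$ be any minimizer of $\Psi(y)=f^*(\mathbf{A}^\top y)-b^\top y$. Then for all $k\ge1$, $$\tfrac12\mathbb{E}\big[\|x^k-\hat x\|_2^2\big]\le\mathbb{E}\big[D_f^{d^k}(x^k,\hat x)\big]\le\frac{4M^2}{(k-1+2M)^2}\,C_0,$$ where $C_0=\big(1-\tfrac1M\big)D_f^{d^0}(x^0,\hat x)+\tfrac12\|y^0-\hat y\|_{\mathbf{B}}^2$.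
   Context: Block notation: $[m]$ is partitioned into $M$ consecutive blocks of sizes $m_1,\dots,m_M$; $\mathbf{I}_m=(\mathbf{U}_1,\dots,\mathbf{U}_M)$ with $\mathbf{U}_i\in\mathbb{R}^{m\times m_i}$, $\mathbf{A}_{(i)}=\mathbf{U}_i^\top\mathbf{A}$, $b_{(i)}=\mathbf{U}_i^\top b$, $y_{(i)}=\mathbf{U}_i^\top y$. $\|y\|_{\mathbf{B}}^2=\sum_{i=1}^M\|\mathbf{A}_{(i)}\|_2^2\,\|y_{(i)}\|_2^2$. $f^*$ is the Fenchel conjugate of $f$ (differentiable). For $x^*\in\partial f(x)$, $D_f^{x^*}(x,y)=f(y)-f(x)-\langle x^*,y-x\rangle$. Expectations are over the random block indices. *)

theory Defs
  imports "HOL-Analysis.Analysis"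
begin

text \<open>mu-strong convexity (here used with mu = 1), for a real-valued (hence finite everywhere) f.\<close>
definition strongly_convex :: "real \<Rightarrow> ('a::real_normed_vector \<Rightarrow> real) \<Rightarrow> bool" where
  "strongly_convex \<mu> f \<longleftrightarrow>
     (\<forall>x y t. 0 \<le> t \<and> t \<le> 1 \<longrightarrow>
        f (t *\<^sub>R x + (1 - t) *\<^sub>R y) \<le> t * f x + (1 - t) * f y - \<mu> / 2 * t * (1 - t) * (norm (x - y))\<^sup>2)"

definition fconj :: "('a::real_inner \<Rightarrow> real) \<Rightarrow> 'a \<Rightarrow> real" where
  "fconj f d = (SUP x. inner d x - f x)"

definition grad :: "('a::real_inner \<Rightarrow> real) \<Rightarrow> 'a \<Rightarrow> 'a" where
  "grad g x = (THE D. GDERIV g x :> D)"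

text \<open>Bregman distance D_f^{xs}(x,y) = f y - f x - <xs, y - x>.\<close>
definition bregman :: "('a::real_inner \<Rightarrow> real) \<Rightarrow> 'a \<Rightarrow> 'a \<Rightarrow> 'a \<Rightarrow> real" where
  "bregman f xs x y = f y - f x - inner xs (y - x)"

text \<open>Blocks: blk j is the (0-based) index of the block containing row j.
  block_proj blk i w = U_i U_i^T w (keep block i entries, zero the rest).\<close>
definition block_proj :: "('m::finite \<Rightarrow> nat) \<Rightarrow> nat \<Rightarrow> real^'m \<Rightarrow> real^'m" where
  "block_proj blk i w = (\<chi> j. if blk j = i then w $ j else 0)"

text \<open>Spectral norm ||A_(i)||_2 of the row block A_(i) = U_i^T A.\<close>
definition block_norm :: "real^'n^'m \<Rightarrow> ('m::finite \<Rightarrow> nat) \<Rightarrow> nat \<Rightarrow> real" where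
  "block_norm A blk i = onorm (\<lambda>x. block_proj blk i (A *v x))"

definition Bnorm_sq :: "real^'n^'m \<Rightarrow> ('m::finite \<Rightarrow> nat) \<Rightarrow> nat \<Rightarrow> real^'m \<Rightarrow> real" where
  "Bnorm_sq A blk M y = (\<Sum>i<M. (block_norm A blk i)\<^sup>2 * (norm (block_proj blk i y))\<^sup>2)"

text \<open>ARBK iteration. State (y^k, z^k, theta_k); s k is the block index i_k chosen at step k.\<close>
fun arbk :: "real^'n^'m \<Rightarrow> real^'m \<Rightarrow> (real^'n \<Rightarrow> real) \<Rightarrow> ('m::finite \<Rightarrow> nat) \<Rightarrow> nat
              \<Rightarrow> (nat \<Rightarrow> nat) \<Rightarrow> nat \<Rightarrow> (real^'m) \<times> (real^'m) \<times> real" where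
  "arbk A b f blk M s 0 = (0, 0, 1 / real M)"
| "arbk A b f blk M s (Suc k) =
     (let (y, z, \<theta>) = arbk A b f blk M s k;
          v = (1 - \<theta>) *\<^sub>R y + \<theta> *\<^sub>R z;
          i = s k;
          g = grad (fconj f) (transpose A *v v);
          r = block_proj blk i (A *v g - b) /\<^sub>R (block_norm A blk i)\<^sup>2;
          z' = z - (1 / (real M * \<theta>)) *\<^sub>R r;
          y' = v + (real M * \<theta>) *\<^sub>R (z' - z);
          \<theta>' = (sqrt (\<theta> ^ 4 + 4 * \<theta>\<^sup>2) - \<theta>\<^sup>2) / 2
      in (y', z', \<theta>'))"

definition arbk_y where "arbk_y A b f blk M s k = fst (arbk A b f blk M s k)"
definition arbk_d where "arbk_d A b f blk M s k = transpose A *v arbk_y A b f blk M s k"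
definition arbk_x where "arbk_x A b f blk M s k = grad (fconj f) (arbk_d A b f blk M s k)"

text \<open>Expectation over i_0,...,i_{k-1} i.i.d. uniform on {0..<M}.\<close>
definition expect :: "nat \<Rightarrow> nat \<Rightarrow> ((nat \<Rightarrow> nat) \<Rightarrow> real) \<Rightarrow> real" where
  "expect M k g = (\<Sum>s\<in>PiE {..<k} (\<lambda>_. {..<M}). g s) / real M ^ k"

end

theory Submission
  imports Defs
begin

text \<open>
  ARBK is accelerated randomized block coordinate descent on the dual function
  Psi y = f*(A^T y) - <b, y>. Since f is 1-strongly convex, the supremum defining f*(d) is
  attained, the maximizer is the gradient of f*, and this gradient is 1-Lipschitz; hence Psi
  is smooth along block i with constant ||A_(i)||^2. By strong duality Psi(yhat) = - f(xhat),
  so the Bregman distance D_f^(d^k)(x^k, xhat) is exactly the dual gap Psi(y^k) - Psi(yhat),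
  and it dominates ||x^k - xhat||^2 / 2.

  The quantity (1 - theta_k) / theta_k^2 (Psi(y^k) - Psi(yhat)) + M^2/2 ||z^k - yhat||_B^2
  does not increase in expectation over i_k: the block step decreases Psi, the change of the
  B-norm is linear in the block of the dual gradient and averages to its full inner product,
  convexity of Psi at v^k absorbs that term, and theta_(k+1)^2 = (1 - theta_(k+1)) theta_k^2
  matches the weights. Finally 1 / theta_k >= M + k/2.
\<close>

lemma strongly_convexD:
  assumes "strongly_convex \<mu> f" "0 \<le> t" "t \<le> 1"
  shows "f (t *\<^sub>R x + (1 - t) *\<^sub>R y) \<le> t * f x + (1 - t) * f y - \<mu> / 2 * t * (1 - t) * (norm (x - y))\<^sup>2"
  using assms(1)[unfolded strongly_convex_def, rule_format, of t x y] assms(2,3) by blast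

lemma strongly_convex_imp_convex_on:
  fixes f :: "'a::real_normed_vector \<Rightarrow> real"
  assumes "strongly_convex \<mu> f" "\<mu> \<ge> 0"
  shows "convex_on UNIV f"
proof (rule convex_onI)
  fix x y :: 'a and t :: real
  assume t: "0 < t" "t < 1"
  have "f (t *\<^sub>R y + (1 - t) *\<^sub>R x) \<le> t * f y + (1 - t) * f x - \<mu> / 2 * t * (1 - t) * (norm (y - x))\<^sup>2"
    using t by (intro strongly_convexD[OF assms(1)]) auto
  moreover have "0 \<le> \<mu> / 2 * t * (1 - t) * (norm (y - x))\<^sup>2"
    using t assms(2) by auto
  ultimately show "f ((1 - t) *\<^sub>R x + t *\<^sub>R y) \<le> (1 - t) * f x + t * f y"
    by (simp only: add.commute)
qed simp

lemma strongly_convex_continuous: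
  fixes f :: "'a::euclidean_space \<Rightarrow> real"
  assumes "strongly_convex 1 f"
  shows "continuous_on S f"
  using convex_on_continuous[OF open_UNIV strongly_convex_imp_convex_on[OF assms zero_le_one]]
  by (rule continuous_on_subset) (rule subset_UNIV)

lemma strongly_convex_quadratic_growth:
  fixes f :: "'a::euclidean_space \<Rightarrow> real"
  assumes sc: "strongly_convex 1 f"
  obtains C C' where "\<And>x. f x \<ge> (norm x)\<^sup>2 / 2 - C * norm x - C'"
proof -
  have "cball (0::'a) 1 \<noteq> {}" by simp
  then obtain x0 where x0: "\<And>y. norm y \<le> 1 \<Longrightarrow> f x0 \<le> f y"
    using continuous_attains_inf[OF compact_cball _ strongly_convex_continuous[OF sc]]
    by (metis mem_cball_0)
  define m where "m = f x0"
  have "f x \<ge> (norm x)\<^sup>2 / 2 - (\<bar>m - f 0\<bar> + 1) * norm x - (\<bar>m\<bar> + \<bar>f 0\<bar> + 1)" for x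
  proof (cases "norm x \<le> 1")
    case True
    then have "(norm x)\<^sup>2 \<le> 1" by (simp add: power_le_one)
    moreover have "0 \<le> (\<bar>m - f 0\<bar> + 1) * norm x" by simp
    ultimately show ?thesis
      using x0[OF True] unfolding m_def by linarith
  next
    case False
    define r where "r = norm x"
    have r: "r > 1" using False r_def by simp
    \<comment> \<open>compare f x with the value of f at x / r, which is at least m\<close>
    have "f ((1 / r) *\<^sub>R x + (1 - 1 / r) *\<^sub>R 0)
          \<le> 1 / r * f x + (1 - 1 / r) * f 0 - 1 / 2 * (1 / r) * (1 - 1 / r) * (norm (x - 0))\<^sup>2"
      using r by (intro strongly_convexD[OF sc]) auto
    moreover have "m \<le> f ((1 / r) *\<^sub>R x + (1 - 1 / r) *\<^sub>R 0)"
      using x0 r unfolding m_def r_def by simp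
    ultimately have "m \<le> 1 / r * f x + (1 - 1 / r) * f 0 - 1 / 2 * (1 / r) * (1 - 1 / r) * r\<^sup>2"
      by (simp add: r_def)
    then have "r * m \<le> r * (1 / r * f x + (1 - 1 / r) * f 0 - 1 / 2 * (1 / r) * (1 - 1 / r) * r\<^sup>2)"
      using r by simp
    also have "\<dots> = f x + (r - 1) * f 0 - (r\<^sup>2 - r) / 2"
      using r by (simp add: field_simps power2_eq_square)
    finally have "f x \<ge> r * (m - f 0) + f 0 + (r\<^sup>2 - r) / 2"
      by (simp add: algebra_simps)
    moreover have "r * (m - f 0) \<ge> - (r * \<bar>m - f 0\<bar>)"
      using r mult_left_mono[of "- \<bar>m - f 0\<bar>" "m - f 0" r] by simp
    ultimately have "f x \<ge> - (r * \<bar>m - f 0\<bar>) + f 0 + (r\<^sup>2 - r) / 2"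
      by linarith
    then show ?thesis
      using r abs_ge_minus_self[of "f 0"] unfolding r_def[symmetric]
      by (simp add: algebra_simps diff_divide_distrib)
  qed
  then show thesis by (rule that)
qed

definition fconj_argmax :: "('a::real_inner \<Rightarrow> real) \<Rightarrow> 'a \<Rightarrow> 'a" where
  "fconj_argmax f d = (ARG_MAX (\<lambda>x. inner d x - f x) x. True)"

lemma fconj_sup_attained:
  fixes f :: "'a::euclidean_space \<Rightarrow> real"
  assumes sc: "strongly_convex 1 f"
  obtains x where "\<And>x'. inner d x' - f x' \<le> inner d x - f x"
proof -
  obtain C C' where growth: "\<And>x. f x \<ge> (norm x)\<^sup>2 / 2 - C * norm x - C'"
    using strongly_convex_quadratic_growth[OF sc] by blast
  define h where "h x = inner d x - f x" for x
  define R where "R = 2 * \<bar>norm d + C\<bar> + 2 * \<bar>C' + f 0\<bar> + 2"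
  have outside: "h x < h 0" if "norm x > R" for x
  proof -
    define r where "r = norm x"
    have "R \<ge> 2" unfolding R_def by simp
    then have r: "r > R" "r \<ge> 1" using that unfolding r_def by simp_all
    have "h x \<le> norm d * r - f x"
      unfolding h_def r_def using norm_cauchy_schwarz[of d x] by linarith
    also have "\<dots> \<le> C' - r * (r / 2 - (norm d + C))"
      using growth[of x] unfolding r_def by (simp add: algebra_simps power2_eq_square)
    also have "\<dots> \<le> C' - r * (\<bar>C' + f 0\<bar> + 1)"
      using r abs_ge_self[of "norm d + C"] unfolding R_def
      by (intro diff_left_mono mult_left_mono) auto
    also have "\<dots> \<le> C' - (\<bar>C' + f 0\<bar> + 1)"
      using r by (intro diff_left_mono) (simp add: mult_le_cancel_right1)
    also have "\<dots> < h 0" unfolding h_def by simp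
    finally show ?thesis .
  qed
  have "R \<ge> 0" unfolding R_def by simp
  then have "cball 0 R \<noteq> {}" by simp
  moreover have "continuous_on (cball 0 R) h"
    unfolding h_def by (intro continuous_intros strongly_convex_continuous[OF sc])
  ultimately obtain x where x: "\<forall>y \<in> cball 0 R. h y \<le> h x"
    using continuous_attains_sup[OF compact_cball] by blast
  have "h 0 \<le> h x" using x \<open>R \<ge> 0\<close> by simp
  then have "h y \<le> h x" for y
    using x outside[of y] by (cases "norm y \<le> R") auto
  with that show thesis unfolding h_def by blast
qed

lemma fconj_argmax_max:
  fixes f :: "'a::euclidean_space \<Rightarrow> real"
  assumes "strongly_convex 1 f"
  shows "inner d x - f x \<le> inner d (fconj_argmax f d) - f (fconj_argmax f d)"
proof -
  obtain x0 where "\<And>x'. inner d x' - f x' \<le> inner d x0 - f x0"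
    using fconj_sup_attained[OF assms] by blast
  then have "is_arg_max (\<lambda>x. inner d x - f x) (\<lambda>_. True) x0"
    by (simp add: is_arg_max_linorder)
  then have "is_arg_max (\<lambda>x. inner d x - f x) (\<lambda>_. True) (fconj_argmax f d)"
    unfolding fconj_argmax_def arg_max_def by (rule someI)
  then show ?thesis by (simp add: is_arg_max_linorder)
qed

lemma fconj_eq:
  fixes f :: "'a::euclidean_space \<Rightarrow> real"
  assumes "strongly_convex 1 f"
  shows "fconj f d = inner d (fconj_argmax f d) - f (fconj_argmax f d)"
  unfolding fconj_def using fconj_argmax_max[OF assms] by (intro cSup_eq_maximum) auto

lemma fconj_ge:
  fixes f :: "'a::euclidean_space \<Rightarrow> real"
  assumes "strongly_convex 1 f"
  shows "inner d x - f x \<le> fconj f d"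
  using fconj_argmax_max[OF assms] fconj_eq[OF assms] by simp

lemma bregman_fconj_argmax_ge:
  fixes f :: "'a::euclidean_space \<Rightarrow> real"
  assumes sc: "strongly_convex 1 f"
  shows "(norm (y - fconj_argmax f d))\<^sup>2 / 2 \<le> bregman f d (fconj_argmax f d) y"
proof -
  define x where "x = fconj_argmax f d"
  define c where "c = bregman f d x y"
  define q where "q = (norm (y - x))\<^sup>2"
  \<comment> \<open>maximality of x along the segment towards y; afterwards let t tend to 0\<close>
  have segment: "(1 - t) / 2 * q \<le> c" if t: "0 < t" "t < 1" for t
  proof -
    have "f (t *\<^sub>R y + (1 - t) *\<^sub>R x) \<le> t * f y + (1 - t) * f x - 1 / 2 * t * (1 - t) * q"
      unfolding q_def using t by (intro strongly_convexD[OF sc]) auto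
    moreover have "inner d (t *\<^sub>R y + (1 - t) *\<^sub>R x) - f (t *\<^sub>R y + (1 - t) *\<^sub>R x) \<le> inner d x - f x"
      unfolding x_def by (rule fconj_argmax_max[OF sc])
    ultimately have "t * ((1 - t) / 2 * q) \<le> t * c"
      unfolding c_def bregman_def by (simp add: inner_add_right inner_diff_right algebra_simps)
    then show ?thesis using t by simp
  qed
  have "q / 2 \<le> c"
  proof (rule ccontr)
    assume "\<not> q / 2 \<le> c"
    moreover have "q / 4 \<le> c" using segment[of "1 / 2"] by simp
    ultimately have q: "q > 0" "c < q / 2" "q / 4 \<le> c" by simp_all
    define t where "t = (q / 2 - c) / q"
    have "0 < t" "t < 1" using q unfolding t_def by (auto simp: field_simps)
    moreover have "t * q = q / 2 - c" using q unfolding t_def by simp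
    ultimately show False using segment[of t] q by (simp add: algebra_simps)
  qed
  then show ?thesis unfolding x_def c_def q_def .
qed

lemma fconj_le_quadratic:
  fixes f :: "'a::euclidean_space \<Rightarrow> real"
  assumes sc: "strongly_convex 1 f"
  shows "fconj f (d + e) \<le> fconj f d + inner (fconj_argmax f d) e + (norm e)\<^sup>2 / 2"
proof -
  define x where "x = fconj_argmax f d"
  define x' where "x' = fconj_argmax f (d + e)"
  have "(norm (x' - x))\<^sup>2 / 2 \<le> f x' - f x - inner d (x' - x)"
    using bregman_fconj_argmax_ge[OF sc] unfolding x_def bregman_def by blast
  moreover have "0 \<le> (norm ((x' - x) - e))\<^sup>2 / 2" by simp
  ultimately have "inner e (x' - x) - (norm e)\<^sup>2 / 2 \<le> f x' - f x - inner d (x' - x)"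
    by (simp add: power2_norm_eq_inner inner_diff_left inner_diff_right inner_commute)
  then show ?thesis
    unfolding fconj_eq[OF sc] x_def[symmetric] x'_def[symmetric]
    by (simp add: inner_add_left inner_add_right inner_diff_right inner_commute)
qed

lemma fconj_ge_linear:
  fixes f :: "'a::euclidean_space \<Rightarrow> real"
  assumes sc: "strongly_convex 1 f"
  shows "fconj f d + inner (fconj_argmax f d) (d' - d) \<le> fconj f d'"
  using fconj_ge[OF sc, of d' "fconj_argmax f d"] fconj_eq[OF sc, of d]
  by (simp add: inner_diff_left inner_commute)

lemma fconj_has_gderiv:
  fixes f :: "'a::euclidean_space \<Rightarrow> real"
  assumes sc: "strongly_convex 1 f"
  shows "GDERIV (fconj f) d :> fconj_argmax f d"
  unfolding gderiv_def has_derivative_at_alt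
proof (intro conjI allI impI)
  show "bounded_linear (\<lambda>h. inner h (fconj_argmax f d))"
    by (rule bounded_linear_inner_left)
  fix e :: real
  assume e: "e > 0"
  show "\<exists>r>0. \<forall>y. norm (y - d) < r \<longrightarrow>
      norm (fconj f y - fconj f d - inner (y - d) (fconj_argmax f d)) \<le> e * norm (y - d)"
  proof (intro exI[of _ "2 * e"] conjI allI impI)
    show "0 < 2 * e" using e by simp
    fix y assume y: "norm (y - d) < 2 * e"
    have "norm (y - d) * norm (y - d) \<le> (2 * e) * norm (y - d)"
      using y by (intro mult_right_mono) auto
    moreover have "fconj f y - fconj f d - inner (y - d) (fconj_argmax f d) \<le> (norm (y - d))\<^sup>2 / 2"
      using fconj_le_quadratic[OF sc, of d "y - d"] by (simp add: inner_commute)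
    moreover have "0 \<le> fconj f y - fconj f d - inner (y - d) (fconj_argmax f d)"
      using fconj_ge_linear[OF sc, of d y] by (simp add: inner_commute)
    ultimately show "norm (fconj f y - fconj f d - inner (y - d) (fconj_argmax f d)) \<le> e * norm (y - d)"
      by (simp add: power2_eq_square)
  qed
qed

lemma grad_fconj:
  fixes f :: "'a::euclidean_space \<Rightarrow> real"
  assumes sc: "strongly_convex 1 f"
  shows "grad (fconj f) d = fconj_argmax f d"
  unfolding grad_def
proof (rule the_equality)
  show "GDERIV (fconj f) d :> fconj_argmax f d" by (rule fconj_has_gderiv[OF sc])
  fix D assume "GDERIV (fconj f) d :> D"
  then have "(\<lambda>h. inner h D) = (\<lambda>h. inner h (fconj_argmax f d))"
    using fconj_has_gderiv[OF sc, of d] unfolding gderiv_def by (rule has_derivative_unique)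
  then have "inner (D - fconj_argmax f d) D = inner (D - fconj_argmax f d) (fconj_argmax f d)"
    by metis
  then have "inner (D - fconj_argmax f d) (D - fconj_argmax f d) = 0"
    by (simp add: inner_diff_right)
  then show "D = fconj_argmax f d" by simp
qed

lemma inner_vector_matrix_mult_right: "inner y (x v* A) = inner x (A *v (y::real^'n))"
  by (metis dot_lmul_matrix inner_commute)

lemma block_proj_nth [simp]: "block_proj blk i w $ j = (if blk j = i then w $ j else 0)"
  by (simp add: block_proj_def)

lemma block_proj_diff: "block_proj blk i (u - v) = block_proj blk i u - block_proj blk i v"
  by (simp add: vec_eq_iff)

lemma block_proj_scaleR: "block_proj blk i (c *\<^sub>R u) = c *\<^sub>R block_proj blk i u"
  by (simp add: vec_eq_iff)

lemma block_proj_block_proj: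
  "block_proj blk j (block_proj blk i u) = (if j = i then block_proj blk i u else 0)"
  by (simp add: vec_eq_iff)

lemma linear_block_proj: "linear (block_proj blk i)"
  by (rule linearI) (simp_all add: vec_eq_iff)

lemma inner_block_proj_left:
  "inner (block_proj blk i u) v = inner (block_proj blk i u) (block_proj blk i (v::real^'m))"
  unfolding inner_vec_def by (rule sum.cong) auto

lemma sum_inner_block_proj:
  assumes "\<forall>j. blk j < M"
  shows "(\<Sum>i<M. inner (block_proj blk i u) (block_proj blk i v)) = inner u (v::real^'m)"
proof -
  have "(\<Sum>i<M. inner (block_proj blk i u) (block_proj blk i v))
      = (\<Sum>j\<in>UNIV. \<Sum>i<M. if blk j = i then u $ j * v $ j else 0)"
    unfolding inner_vec_def by (subst sum.swap) (auto intro!: sum.cong)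
  also have "\<dots> = inner u v"
    using assms by (simp add: inner_vec_def)
  finally show ?thesis .
qed

lemma bounded_linear_block_proj_mult: "bounded_linear (\<lambda>x. block_proj blk i (A *v (x::real^'n)))"
  using linear_compose[OF matrix_vector_mul_linear[of A] linear_block_proj[of blk i]]
  by (simp add: o_def linear_conv_bounded_linear)

lemma block_norm_nonneg: "block_norm A blk i \<ge> 0"
  unfolding block_norm_def by (rule onorm_pos_le[OF bounded_linear_block_proj_mult])

lemma norm_block_proj_mult_le: "norm (block_proj blk i (A *v x)) \<le> block_norm A blk i * norm x"
  unfolding block_norm_def by (rule onorm[OF bounded_linear_block_proj_mult])

lemma block_norm_pos:
  assumes "A $ j \<noteq> 0" "blk j = i"
  shows "block_norm A blk i > 0"
proof -
  have "(A *v A $ j) $ j = inner (A $ j) (A $ j)"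
    by (simp add: matrix_vector_mult_def inner_vec_def)
  then have "block_proj blk i (A *v A $ j) \<noteq> 0"
    using assms by (metis block_proj_nth inner_eq_zero_iff zero_index)
  then have "0 < norm (block_proj blk i (A *v A $ j))" by simp
  also have "\<dots> \<le> block_norm A blk i * norm (A $ j)" by (rule norm_block_proj_mult_le)
  finally show ?thesis
    using block_norm_nonneg[of A blk i] by (simp add: zero_less_mult_iff)
qed

lemma norm_transpose_block_proj_le:
  "norm (transpose A *v block_proj blk i w) \<le> block_norm A blk i * norm (block_proj blk i w)"
proof -
  define u where "u = transpose A *v block_proj blk i w"
  have "(norm u)\<^sup>2 = inner u u" by (simp add: power2_norm_eq_inner)
  also have "\<dots> = inner (block_proj blk i w) (A *v u)"
    by (subst (1) u_def) (simp add: dot_lmul_matrix)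
  also have "\<dots> = inner (block_proj blk i w) (block_proj blk i (A *v u))"
    by (rule inner_block_proj_left)
  also have "\<dots> \<le> norm (block_proj blk i w) * norm (block_proj blk i (A *v u))"
    by (rule norm_cauchy_schwarz)
  also have "\<dots> \<le> norm (block_proj blk i w) * (block_norm A blk i * norm u)"
    by (intro mult_left_mono norm_block_proj_mult_le) simp
  finally have "norm u * norm u \<le> (block_norm A blk i * norm (block_proj blk i w)) * norm u"
    by (simp add: power2_eq_square algebra_simps)
  then show ?thesis
    using block_norm_nonneg[of A blk i] unfolding u_def[symmetric]
    by (cases "norm u = 0") (simp_all add: mult_le_cancel_right)
qed

lemma Bnorm_sq_nonneg: "Bnorm_sq A blk M w \<ge> 0"
  unfolding Bnorm_sq_def by (intro sum_nonneg) simp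

lemma Bnorm_sq_diff_block:
  fixes e q :: "real^'m"
  assumes "i < M"
  shows "Bnorm_sq A blk M (e - c *\<^sub>R block_proj blk i q)
       = Bnorm_sq A blk M e
         - 2 * c * (block_norm A blk i)\<^sup>2 * inner (block_proj blk i e) (block_proj blk i q)
         + c\<^sup>2 * (block_norm A blk i)\<^sup>2 * (norm (block_proj blk i q))\<^sup>2"
proof -
  let ?term = "\<lambda>j e. (block_norm A blk j)\<^sup>2 * (norm (block_proj blk j e))\<^sup>2"
  have sq: "(norm (a - c *\<^sub>R p))\<^sup>2 = (norm a)\<^sup>2 - 2 * c * inner a p + c\<^sup>2 * (norm p)\<^sup>2" for a p :: "real^'m"
    by (simp add: power2_norm_eq_inner inner_diff_left inner_diff_right inner_commute
        power2_eq_square[of c] algebra_simps)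
  have "?term j (e - c *\<^sub>R block_proj blk i q) = ?term j e +
          (if j = i then - 2 * c * (block_norm A blk i)\<^sup>2 * inner (block_proj blk i e) (block_proj blk i q)
             + c\<^sup>2 * (block_norm A blk i)\<^sup>2 * (norm (block_proj blk i q))\<^sup>2 else 0)" for j
    by (cases "j = i")
      (simp_all add: block_proj_diff block_proj_scaleR block_proj_block_proj sq algebra_simps)
  then show ?thesis
    unfolding Bnorm_sq_def using assms by (simp add: sum.distrib)
qed

definition theta_next :: "real \<Rightarrow> real" where
  "theta_next t = (sqrt (t ^ 4 + 4 * t\<^sup>2) - t\<^sup>2) / 2"

lemma theta_next_pos:
  assumes "0 < t" shows "0 < theta_next t"
proof -
  have "t\<^sup>2 = sqrt (t ^ 4)"
    by (rule real_sqrt_unique[symmetric]) (simp_all add: power2_eq_square power4_eq_xxxx)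
  also have "\<dots> < sqrt (t ^ 4 + 4 * t\<^sup>2)" using assms by (intro real_sqrt_less_mono) simp
  finally show ?thesis unfolding theta_next_def by simp
qed

lemma theta_next_less_one: "theta_next t < 1"
proof -
  have "sqrt (t ^ 4 + 4 * t\<^sup>2) < sqrt ((t\<^sup>2 + 2)\<^sup>2)"
    by (intro real_sqrt_less_mono) (simp add: power2_eq_square power4_eq_xxxx algebra_simps)
  then show ?thesis unfolding theta_next_def by simp
qed

lemma theta_next_sq: "(theta_next t)\<^sup>2 = (1 - theta_next t) * t\<^sup>2"
proof -
  define S where "S = sqrt (t ^ 4 + 4 * t\<^sup>2)"
  have "S\<^sup>2 = t ^ 4 + 4 * t\<^sup>2" unfolding S_def by simp
  then show ?thesis
    unfolding theta_next_def S_def[symmetric]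
    by (simp add: power2_eq_square power4_eq_xxxx field_simps)
qed

lemma theta_next_weight:
  assumes "0 < t" shows "(1 - theta_next t) / (theta_next t)\<^sup>2 = 1 / t\<^sup>2"
  using theta_next_sq[of t] theta_next_pos[OF assms] assms by (simp add: field_simps)

lemma inverse_theta_next_ge:
  assumes t: "0 < t" shows "1 / t + 1 / 2 \<le> 1 / theta_next t"
proof (rule ccontr)
  define a where "a = 1 / theta_next t"
  define c where "c = 1 / t"
  have "a > 1" "c > 0"
    using theta_next_pos[OF t] theta_next_less_one[of t] t unfolding a_def c_def by simp_all
  have "a\<^sup>2 - a = c\<^sup>2"
    using theta_next_weight[OF t] theta_next_pos[OF t] unfolding a_def c_def
    by (simp add: field_simps power2_eq_square)
  \<comment> \<open>x^2 - x increases for x > 1/2 and equals c^2 - 1/4 < a^2 - a at x = c + 1/2\<close>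
  assume "\<not> 1 / t + 1 / 2 \<le> 1 / theta_next t"
  then have "0 < (c + 1 / 2 - a) * (c + a - 1 / 2)"
    using \<open>a > 1\<close> \<open>c > 0\<close> unfolding a_def c_def by simp
  also have "\<dots> = - 1 / 4"
    using \<open>a\<^sup>2 - a = c\<^sup>2\<close> by (simp add: power2_eq_square field_simps)
  finally show False by simp
qed

fun arbk_theta :: "nat \<Rightarrow> nat \<Rightarrow> real" where
  "arbk_theta M 0 = 1 / real M"
| "arbk_theta M (Suc k) = theta_next (arbk_theta M k)"

lemma arbk_theta_pos: "M \<ge> 1 \<Longrightarrow> 0 < arbk_theta M k"
  by (induction k) (simp_all add: theta_next_pos)

lemma arbk_theta_le_one: "M \<ge> 1 \<Longrightarrow> arbk_theta M k \<le> 1"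
  by (cases k) (simp_all add: less_imp_le[OF theta_next_less_one])

lemma inverse_arbk_theta_ge: "M \<ge> 1 \<Longrightarrow> real M + real k / 2 \<le> 1 / arbk_theta M k"
proof (induction k)
  case (Suc k)
  show ?case
    using Suc.IH[OF Suc.prems] inverse_theta_next_ge[OF arbk_theta_pos[OF Suc.prems, of k]]
    by (simp only: arbk_theta.simps of_nat_Suc) argo
qed simp

lemma arbk_theta_le: "M \<ge> 1 \<Longrightarrow> arbk_theta M k \<le> 2 / (real k + 2 * real M)"
  using inverse_arbk_theta_ge[of M k] arbk_theta_pos[of M k] by (simp add: field_simps)

lemma snd_snd_arbk: "snd (snd (arbk A b f blk M s k)) = arbk_theta M k"
  by (induction k) (auto simp: Let_def theta_next_def split: prod.split)

lemma arbk_cong: "(\<And>j. j < k \<Longrightarrow> s j = s' j) \<Longrightarrow> arbk A b f blk M s k = arbk A b f blk M s' k"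
  by (induction k) (simp_all add: Let_def split: prod.split)

definition arbk_z :: "real^'n^'m \<Rightarrow> real^'m \<Rightarrow> (real^'n \<Rightarrow> real) \<Rightarrow> ('m::finite \<Rightarrow> nat) \<Rightarrow> nat
    \<Rightarrow> (nat \<Rightarrow> nat) \<Rightarrow> nat \<Rightarrow> real^'m" where
  "arbk_z A b f blk M s k = fst (snd (arbk A b f blk M s k))"

lemma expect_Suc:
  "expect M (Suc k) g = expect M k (\<lambda>s. (\<Sum>i<M. g (s(k := i))) / real M)"
proof -
  have inj: "inj_on (\<lambda>(i, s). s(k := i)) ({..<M} \<times> PiE {..<k} (\<lambda>_. {..<M}))"
    using inj_combinator[of k "{..<k}" "\<lambda>_. {..<M}"] by simp
  have "PiE {..<Suc k} (\<lambda>_. {..<M}) = (\<lambda>(i, s). s(k := i)) ` ({..<M} \<times> PiE {..<k} (\<lambda>_. {..<M}))"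
    by (simp add: lessThan_Suc PiE_insert_eq)
  then have "(\<Sum>s\<in>PiE {..<Suc k} (\<lambda>_. {..<M}). g s)
      = (\<Sum>(i, s)\<in>{..<M} \<times> PiE {..<k} (\<lambda>_. {..<M}). g (s(k := i)))"
    by (simp only: sum.reindex[OF inj]) (simp add: o_def split_def)
  also have "\<dots> = (\<Sum>s\<in>PiE {..<k} (\<lambda>_. {..<M}). \<Sum>i<M. g (s(k := i)))"
    by (simp add: sum.cartesian_product[symmetric] sum.swap[of _ "{..<M}"])
  finally show ?thesis
    unfolding expect_def by (simp add: sum_divide_distrib[symmetric] field_simps)
qed

lemma expect_mono:
  "(\<And>s. s \<in> PiE {..<k} (\<lambda>_. {..<M}) \<Longrightarrow> g s \<le> h s) \<Longrightarrow> expect M k g \<le> expect M k h"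
  unfolding expect_def by (intro divide_right_mono sum_mono) auto

lemma expect_cmult: "expect M k (\<lambda>s. c * g s) = c * expect M k g"
  unfolding expect_def by (simp add: sum_distrib_left)

locale arbk_setting =
  fixes A :: "real^'n^'m::finite" and b :: "real^'m" and f :: "real^'n \<Rightarrow> real"
    and blk :: "'m \<Rightarrow> nat" and M :: nat and xhat :: "real^'n" and yhat :: "real^'m"
  assumes rows_nonzero: "\<forall>j. A $ j \<noteq> 0"
    and sc: "strongly_convex 1 f"
    and xhat_feas: "A *v xhat = b"
    and xhat_min: "\<forall>x. A *v x = b \<longrightarrow> f xhat \<le> f x"
    and M_pos: "M \<ge> 1"
    and blk_range: "\<forall>j. blk j < M"
    and blk_onto: "\<forall>i<M. \<exists>j. blk j = i"
    and yhat_min: "\<forall>y. fconj f (transpose A *v yhat) - inner b yhat \<le> fconj f (transpose A *v y) - inner b y"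
begin

definition Psi :: "real^'m \<Rightarrow> real" where
  "Psi y = fconj f (transpose A *v y) - inner b y"

definition dual_grad :: "real^'m \<Rightarrow> real^'m" where
  "dual_grad y = A *v fconj_argmax f (transpose A *v y) - b"

abbreviation L :: "nat \<Rightarrow> real" where
  "L i \<equiv> (block_norm A blk i)\<^sup>2"

abbreviation P :: "nat \<Rightarrow> real^'m \<Rightarrow> real^'m" where
  "P i \<equiv> block_proj blk i"

lemma Psi_min: "Psi yhat \<le> Psi y"
  using yhat_min unfolding Psi_def by blast

lemma L_pos: "i < M \<Longrightarrow> 0 < L i"
  using blk_onto rows_nonzero block_norm_pos[of A _ blk i] by fastforce

lemma Psi_ge_linear: "Psi v + inner (dual_grad v) (u - v) \<le> Psi u"
  using fconj_ge_linear[OF sc, of "transpose A *v v" "transpose A *v u"]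
  unfolding Psi_def dual_grad_def
  by (simp add: dot_lmul_matrix inner_vector_matrix_mult_right inner_diff_left inner_diff_right
      inner_commute flip: matrix_vector_mult_diff_distrib)

lemma Psi_block_le_quadratic:
  "Psi (y - P i w) \<le> Psi y - inner (dual_grad y) (P i w) + L i / 2 * (norm (P i w))\<^sup>2"
proof -
  define e where "e = - (transpose A *v P i w)"
  have "(norm e)\<^sup>2 \<le> L i * (norm (P i w))\<^sup>2"
    using norm_transpose_block_proj_le[of A blk i w] unfolding e_def norm_minus_cancel
    by (metis norm_ge_zero power_mono power_mult_distrib)
  moreover have "fconj f (transpose A *v y + e)
      \<le> fconj f (transpose A *v y) + inner (fconj_argmax f (transpose A *v y)) e + (norm e)\<^sup>2 / 2"
    by (rule fconj_le_quadratic[OF sc])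
  moreover have "transpose A *v (y - P i w) = transpose A *v y + e"
    unfolding e_def by (simp add: matrix_vector_mult_diff_distrib)
  ultimately show ?thesis
    unfolding Psi_def dual_grad_def e_def
    by (simp add: dot_lmul_matrix inner_vector_matrix_mult_right inner_diff_left inner_diff_right
        inner_commute)
qed

lemma Psi_block_step:
  assumes "i < M"
  shows "Psi (y - (1 / L i) *\<^sub>R P i (dual_grad y)) \<le> Psi y - (norm (P i (dual_grad y)))\<^sup>2 / (2 * L i)"
proof -
  define g where "g = dual_grad y"
  define n where "n = norm (P i g)"
  have L: "0 < L i" using L_pos[OF assms] .
  have "inner g (P i g) = n\<^sup>2"
    using inner_block_proj_left[of blk i g g] unfolding n_def
    by (simp add: power2_norm_eq_inner inner_commute)
  then have "inner g (P i ((1 / L i) *\<^sub>R g)) = n\<^sup>2 / L i"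
    by (simp add: block_proj_scaleR)
  moreover have "norm (P i ((1 / L i) *\<^sub>R g)) = n / L i"
    using L unfolding n_def by (simp add: block_proj_scaleR)
  ultimately have "Psi (y - P i ((1 / L i) *\<^sub>R g)) \<le> Psi y - n\<^sup>2 / L i + L i / 2 * (n / L i)\<^sup>2"
    using Psi_block_le_quadratic[of y i "(1 / L i) *\<^sub>R g"] unfolding g_def by simp
  also have "\<dots> = Psi y - n\<^sup>2 / (2 * L i)"
    using L by (simp add: field_simps power2_eq_square)
  finally show ?thesis by (simp add: block_proj_scaleR g_def n_def)
qed

lemma dual_grad_yhat: "dual_grad yhat = 0"
proof -
  have "P i (dual_grad yhat) = 0" if "i < M" for i
  proof -
    have "(norm (P i (dual_grad yhat)))\<^sup>2 / (2 * L i) \<le> 0"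
      using Psi_block_step[OF that, of yhat] Psi_min[of "yhat - (1 / L i) *\<^sub>R P i (dual_grad yhat)"]
      by linarith
    then show ?thesis
      using L_pos[OF that] by (simp add: divide_le_0_iff)
  qed
  then show ?thesis
    using blk_range by (metis block_proj_nth vec_eq_iff zero_index)
qed

lemma Psi_yhat: "Psi yhat = - f xhat"
proof -
  define x where "x = fconj_argmax f (transpose A *v yhat)"
  have Ax: "A *v x = b" using dual_grad_yhat unfolding dual_grad_def x_def by simp
  have "Psi yhat = - f x"
    using fconj_eq[OF sc, of "transpose A *v yhat"]
    unfolding Psi_def x_def[symmetric]
    by (simp add: dot_lmul_matrix inner_vector_matrix_mult_right Ax inner_commute)
  moreover have "- f xhat \<le> Psi yhat"
    using fconj_ge[OF sc, of "transpose A *v yhat" xhat]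
    unfolding Psi_def by (simp add: dot_lmul_matrix inner_vector_matrix_mult_right xhat_feas inner_commute)
  ultimately show ?thesis using xhat_min Ax by fastforce
qed

lemma bregman_eq_Psi_gap:
  "bregman f (transpose A *v y) (grad (fconj f) (transpose A *v y)) xhat = Psi y - Psi yhat"
proof -
  have "bregman f (transpose A *v y) (grad (fconj f) (transpose A *v y)) xhat = Psi y + f xhat"
    using fconj_eq[OF sc, of "transpose A *v y"] unfolding bregman_def grad_fconj[OF sc] Psi_def
    by (simp add: inner_diff_right dot_lmul_matrix inner_vector_matrix_mult_right xhat_feas inner_commute)
  then show ?thesis by (simp add: Psi_yhat)
qed

abbreviation Y :: "(nat \<Rightarrow> nat) \<Rightarrow> nat \<Rightarrow> real^'m" where
  "Y s k \<equiv> arbk_y A b f blk M s k"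

abbreviation Z :: "(nat \<Rightarrow> nat) \<Rightarrow> nat \<Rightarrow> real^'m" where
  "Z s k \<equiv> arbk_z A b f blk M s k"

abbreviation \<theta> :: "nat \<Rightarrow> real" where
  "\<theta> k \<equiv> arbk_theta M k"

abbreviation V :: "(nat \<Rightarrow> nat) \<Rightarrow> nat \<Rightarrow> real^'m" where
  "V s k \<equiv> (1 - \<theta> k) *\<^sub>R Y s k + \<theta> k *\<^sub>R Z s k"

lemma arbk_Suc:
  "Y s (Suc k) = V s k - (1 / L (s k)) *\<^sub>R P (s k) (dual_grad (V s k))"
  "Z s (Suc k) = Z s k - (1 / (real M * \<theta> k * L (s k))) *\<^sub>R P (s k) (dual_grad (V s k))"
proof -
  obtain y z t where yzt: "arbk A b f blk M s k = (y, z, t)" by (metis prod.exhaust)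
  then have t: "\<theta> k = t" and y: "Y s k = y" and z: "Z s k = z"
    using snd_snd_arbk[of A b f blk M s k] unfolding arbk_y_def arbk_z_def by simp_all
  define v where "v = (1 - t) *\<^sub>R y + t *\<^sub>R z"
  define q where "q = P (s k) (dual_grad v)"
  have "block_proj blk (s k) (A *v grad (fconj f) (transpose A *v v) - b) /\<^sub>R (block_norm A blk (s k))\<^sup>2
      = (1 / L (s k)) *\<^sub>R q"
    unfolding q_def dual_grad_def grad_fconj[OF sc] by (simp add: divide_inverse)
  then have step: "arbk A b f blk M s (Suc k) =
      (v + (real M * t) *\<^sub>R ((z - (1 / (real M * t)) *\<^sub>R ((1 / L (s k)) *\<^sub>R q)) - z),
       z - (1 / (real M * t)) *\<^sub>R ((1 / L (s k)) *\<^sub>R q), theta_next t)"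
    by (simp only: arbk.simps yzt Let_def prod.case v_def theta_next_def)
  have "real M * t \<noteq> 0" using M_pos arbk_theta_pos[OF M_pos, of k] t by simp
  then show "Y s (Suc k) = V s k - (1 / L (s k)) *\<^sub>R P (s k) (dual_grad (V s k))"
    "Z s (Suc k) = Z s k - (1 / (real M * \<theta> k * L (s k))) *\<^sub>R P (s k) (dual_grad (V s k))"
    unfolding t y z v_def[symmetric] unfolding arbk_y_def arbk_z_def step by (simp_all add: q_def)
qed

lemma Psi_momentum_bound:
  assumes t: "0 \<le> t" "t \<le> 1" and v: "v = (1 - t) *\<^sub>R y + t *\<^sub>R z"
  shows "Psi v - t * inner (z - u) (dual_grad v) \<le> (1 - t) * Psi y + t * Psi u"
proof -
  define g where "g = dual_grad v"
  have "(1 - t) * (Psi v + inner g (y - v)) + t * (Psi v + inner g (u - v)) \<le> (1 - t) * Psi y + t * Psi u"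
    using Psi_ge_linear t unfolding g_def by (intro add_mono mult_left_mono) auto
  moreover have "(1 - t) *\<^sub>R (y - v) + t *\<^sub>R (u - v) = - t *\<^sub>R (z - u)"
    unfolding v by (simp add: algebra_simps)
  then have "(1 - t) * inner g (y - v) + t * inner g (u - v) = inner g (- t *\<^sub>R (z - u))"
    by (metis inner_add_right inner_scaleR_right)
  then have "(1 - t) * inner g (y - v) + t * inner g (u - v) = - t * inner (z - u) g"
    by (simp add: inner_commute)
  then have "(1 - t) * (Psi v + inner g (y - v)) + t * (Psi v + inner g (u - v)) = Psi v - t * inner (z - u) g"
    by (simp add: algebra_simps)
  ultimately show ?thesis unfolding g_def by simp
qed

lemma block_step_bound:
  fixes v z u :: "real^'m"
  assumes i: "i < M" and t: "0 < t"
  defines "g \<equiv> dual_grad v"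
  shows "Psi (v - (1 / L i) *\<^sub>R P i g)
           + (real M)\<^sup>2 * t\<^sup>2 / 2 * Bnorm_sq A blk M (z - (1 / (real M * t * L i)) *\<^sub>R P i g - u)
         \<le> Psi v + (real M)\<^sup>2 * t\<^sup>2 / 2 * Bnorm_sq A blk M (z - u)
           - real M * t * inner (P i (z - u)) (P i g)"
proof -
  define c where "c = 1 / (real M * t * L i)"
  have "block_norm A blk i \<noteq> 0" "0 < real M" using L_pos[OF i] M_pos by auto
  have B: "Bnorm_sq A blk M (z - c *\<^sub>R P i g - u)
      = Bnorm_sq A blk M (z - u)
        + (c\<^sup>2 * L i * (norm (P i g))\<^sup>2 - 2 * c * L i * inner (P i (z - u)) (P i g))"
    using Bnorm_sq_diff_block[OF i, where A = A and blk = blk and e = "z - u" and c = c and q = g]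
    by (simp add: algebra_simps)
  \<comment> \<open>the weight (M t)^2 / 2 is chosen so that the descent of the block step is cancelled\<close>
  have W: "(real M)\<^sup>2 * t\<^sup>2 / 2 * (Bnorm_sq A blk M (z - u)
        + (c\<^sup>2 * L i * (norm (P i g))\<^sup>2 - 2 * c * L i * inner (P i (z - u)) (P i g)))
      = (real M)\<^sup>2 * t\<^sup>2 / 2 * Bnorm_sq A blk M (z - u)
        + (norm (P i g))\<^sup>2 / (2 * L i) - real M * t * inner (P i (z - u)) (P i g)"
    using t \<open>block_norm A blk i \<noteq> 0\<close> \<open>0 < real M\<close> unfolding c_def
    by (simp add: field_simps power2_eq_square)
  show ?thesis
    using Psi_block_step[OF i, of v] unfolding c_def[symmetric] g_def[symmetric] B W by linarith
qed

lemma averaged_step_bound: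
  fixes v y z :: "real^'m"
  assumes t: "0 < t" "t \<le> 1" and v: "v = (1 - t) *\<^sub>R y + t *\<^sub>R z"
  defines "g \<equiv> dual_grad v"
  shows "(\<Sum>i<M. Psi (v - (1 / L i) *\<^sub>R P i g) - Psi yhat
            + (real M)\<^sup>2 * t\<^sup>2 / 2 * Bnorm_sq A blk M (z - (1 / (real M * t * L i)) *\<^sub>R P i g - yhat)) / real M
         \<le> (1 - t) * (Psi y - Psi yhat) + (real M)\<^sup>2 * t\<^sup>2 / 2 * Bnorm_sq A blk M (z - yhat)"
proof -
  define Q where "Q = Psi v - Psi yhat + (real M)\<^sup>2 * t\<^sup>2 / 2 * Bnorm_sq A blk M (z - yhat)"
  have "(\<Sum>i<M. Psi (v - (1 / L i) *\<^sub>R P i g) - Psi yhat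
            + (real M)\<^sup>2 * t\<^sup>2 / 2 * Bnorm_sq A blk M (z - (1 / (real M * t * L i)) *\<^sub>R P i g - yhat))
        \<le> (\<Sum>i<M. Q - real M * t * inner (P i (z - yhat)) (P i g))"
  proof (rule sum_mono)
    fix i assume "i \<in> {..<M}"
    then show "Psi (v - (1 / L i) *\<^sub>R P i g) - Psi yhat
            + (real M)\<^sup>2 * t\<^sup>2 / 2 * Bnorm_sq A blk M (z - (1 / (real M * t * L i)) *\<^sub>R P i g - yhat)
        \<le> Q - real M * t * inner (P i (z - yhat)) (P i g)"
      using block_step_bound[of i t v z yhat] t unfolding Q_def g_def by simp
  qed
  also have "\<dots> = real M * Q - real M * t * (\<Sum>i<M. inner (P i (z - yhat)) (P i g))"
    by (simp add: sum_subtractf sum_distrib_left)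
  also have "\<dots> = real M * (Q - t * inner (z - yhat) g)"
    by (simp only: sum_inner_block_proj[OF blk_range]) (simp add: algebra_simps)
  finally have "(\<Sum>i<M. Psi (v - (1 / L i) *\<^sub>R P i g) - Psi yhat
            + (real M)\<^sup>2 * t\<^sup>2 / 2 * Bnorm_sq A blk M (z - (1 / (real M * t * L i)) *\<^sub>R P i g - yhat)) / real M
        \<le> Q - t * inner (z - yhat) g"
    using M_pos by (simp add: divide_le_eq mult.commute)
  also have "\<dots> \<le> (1 - t) * (Psi y - Psi yhat) + (real M)\<^sup>2 * t\<^sup>2 / 2 * Bnorm_sq A blk M (z - yhat)"
    using Psi_momentum_bound[OF less_imp_le[OF t(1)] t(2) v, of yhat] unfolding Q_def g_def
    by (simp add: algebra_simps)
  finally show ?thesis .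
qed

definition lyapunov :: "(nat \<Rightarrow> nat) \<Rightarrow> nat \<Rightarrow> real" where
  "lyapunov s k = (1 - \<theta> k) / (\<theta> k)\<^sup>2 * (Psi (Y s k) - Psi yhat)
                  + (real M)\<^sup>2 / 2 * Bnorm_sq A blk M (Z s k - yhat)"

lemma lyapunov_step: "(\<Sum>i<M. lyapunov (s(k := i)) (Suc k)) / real M \<le> lyapunov s k"
proof -
  define t where "t = \<theta> k"
  have t: "0 < t" "t \<le> 1"
    unfolding t_def using arbk_theta_pos[OF M_pos] arbk_theta_le_one[OF M_pos] by auto
  have "arbk A b f blk M (s(k := i)) k = arbk A b f blk M s k" for i
    by (rule arbk_cong) simp
  then have YZ: "Y (s(k := i)) k = Y s k" "Z (s(k := i)) k = Z s k" for i
    unfolding arbk_y_def arbk_z_def by simp_all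
  have weight: "(1 - \<theta> (Suc k)) / (\<theta> (Suc k))\<^sup>2 = 1 / t\<^sup>2"
    using theta_next_weight[OF t(1)] unfolding t_def by simp
  define step where "step i = Psi (V s k - (1 / L i) *\<^sub>R P i (dual_grad (V s k))) - Psi yhat
      + (real M)\<^sup>2 * t\<^sup>2 / 2
        * Bnorm_sq A blk M (Z s k - (1 / (real M * t * L i)) *\<^sub>R P i (dual_grad (V s k)) - yhat)"
    for i
  have "lyapunov (s(k := i)) (Suc k) = step i / t\<^sup>2" for i
    unfolding lyapunov_def weight arbk_Suc YZ step_def using t by (simp add: t_def field_simps)
  then have "(\<Sum>i<M. lyapunov (s(k := i)) (Suc k)) / real M = ((\<Sum>i<M. step i) / real M) / t\<^sup>2"
    by (simp add: sum_divide_distrib[symmetric] mult.commute)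
  also have "\<dots> \<le> ((1 - t) * (Psi (Y s k) - Psi yhat)
      + (real M)\<^sup>2 * t\<^sup>2 / 2 * Bnorm_sq A blk M (Z s k - yhat)) / t\<^sup>2"
    unfolding step_def t_def using t
    by (intro divide_right_mono averaged_step_bound) (simp_all add: t_def)
  also have "\<dots> = lyapunov s k"
    unfolding lyapunov_def t_def[symmetric] using t by (simp add: field_simps)
  finally show ?thesis .
qed

lemma lyapunov_0:
  "lyapunov s 0 = (real M)\<^sup>2 *
     ((1 - 1 / real M) * (Psi (Y s 0) - Psi yhat) + 1 / 2 * Bnorm_sq A blk M (Y s 0 - yhat))"
  using M_pos unfolding lyapunov_def
  by (simp add: arbk_y_def arbk_z_def field_simps power2_eq_square)

lemma expect_lyapunov_le: "expect M k (\<lambda>s. lyapunov s k) \<le> lyapunov s0 0"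
proof (induction k)
  case 0
  show ?case unfolding expect_def lyapunov_0 by (simp add: arbk_y_def)
next
  case (Suc k)
  have "expect M (Suc k) (\<lambda>s. lyapunov s (Suc k))
      = expect M k (\<lambda>s. (\<Sum>i<M. lyapunov (s(k := i)) (Suc k)) / real M)"
    by (rule expect_Suc)
  also have "\<dots> \<le> expect M k (\<lambda>s. lyapunov s k)"
    by (intro expect_mono lyapunov_step)
  finally show ?case using Suc.IH by simp
qed

lemma Psi_gap_le_lyapunov: "Psi (Y s (Suc k)) - Psi yhat \<le> (\<theta> k)\<^sup>2 * lyapunov s (Suc k)"
proof -
  have "0 < \<theta> k" using arbk_theta_pos[OF M_pos] .
  then have "(\<theta> k)\<^sup>2 * lyapunov s (Suc k) = Psi (Y s (Suc k)) - Psi yhat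
      + (\<theta> k)\<^sup>2 * ((real M)\<^sup>2 / 2 * Bnorm_sq A blk M (Z s (Suc k) - yhat))"
    unfolding lyapunov_def arbk_theta.simps theta_next_weight[OF \<open>0 < \<theta> k\<close>]
    by (simp add: field_simps)
  then show ?thesis using Bnorm_sq_nonneg[of A blk M] by simp
qed

lemma expect_Psi_gap_le:
  "expect M (Suc k) (\<lambda>s. Psi (Y s (Suc k)) - Psi yhat)
     \<le> (2 / (real k + 2 * real M))\<^sup>2 * lyapunov s0 0"
proof -
  have "0 \<le> lyapunov s0 0"
    unfolding lyapunov_0 using M_pos Psi_min[of "Y s0 0"] Bnorm_sq_nonneg[of A blk M]
    by (intro mult_nonneg_nonneg add_nonneg_nonneg) auto
  have "expect M (Suc k) (\<lambda>s. Psi (Y s (Suc k)) - Psi yhat)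
      \<le> expect M (Suc k) (\<lambda>s. (\<theta> k)\<^sup>2 * lyapunov s (Suc k))"
    by (intro expect_mono Psi_gap_le_lyapunov)
  also have "\<dots> \<le> (\<theta> k)\<^sup>2 * lyapunov s0 0"
    unfolding expect_cmult by (intro mult_left_mono expect_lyapunov_le) simp
  also have "\<dots> \<le> (2 / (real k + 2 * real M))\<^sup>2 * lyapunov s0 0"
    using arbk_theta_le[OF M_pos] arbk_theta_pos[OF M_pos] \<open>0 \<le> lyapunov s0 0\<close>
    by (intro mult_right_mono power_mono) (auto intro: less_imp_le)
  finally show ?thesis .
qed

lemma bregman_arbk_eq_Psi_gap:
  "bregman f (arbk_d A b f blk M s k) (arbk_x A b f blk M s k) xhat = Psi (Y s k) - Psi yhat"
  unfolding arbk_x_def arbk_d_def by (rule bregman_eq_Psi_gap)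

lemma norm_arbk_x_le_bregman:
  "(norm (arbk_x A b f blk M s k - xhat))\<^sup>2 / 2
     \<le> bregman f (arbk_d A b f blk M s k) (arbk_x A b f blk M s k) xhat"
  using bregman_fconj_argmax_ge[OF sc, of xhat]
  unfolding arbk_x_def grad_fconj[OF sc] by (simp add: norm_minus_commute)

end

theorem theorem2:
  fixes A :: "real^'n^('m::{finite,linorder})" and b :: "real^('m::{finite,linorder})" and f :: "real^'n \<Rightarrow> real"
    and blk :: "('m::{finite,linorder}) \<Rightarrow> nat" and M :: nat and xhat :: "real^'n" and yhat :: "real^('m::{finite,linorder})" and k :: nat
  assumes rows_nonzero: "\<forall>j. A $ j \<noteq> 0"
    and b_range: "b \<in> range (\<lambda>x. A *v x)"
    and sc: "strongly_convex 1 f"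
    and xhat_feas: "A *v xhat = b"
    and xhat_min: "\<forall>x. A *v x = b \<longrightarrow> f xhat \<le> f x"
    and M_pos: "M \<ge> 1"
    and blk_range: "\<forall>j. blk j < M"
    and blk_onto: "\<forall>i<M. \<exists>j. blk j = i"
    and blk_consec: "mono blk"
    and yhat_min: "\<forall>y. fconj f (transpose A *v yhat) - inner b yhat \<le> fconj f (transpose A *v y) - inner b y"
    and k: "k \<ge> 1"
  shows "1/2 * expect M k (\<lambda>s. (norm (arbk_x A b f blk M s k - xhat))\<^sup>2)
           \<le> expect M k (\<lambda>s. bregman f (arbk_d A b f blk M s k) (arbk_x A b f blk M s k) xhat)
       \<and> expect M k (\<lambda>s. bregman f (arbk_d A b f blk M s k) (arbk_x A b f blk M s k) xhat)
           \<le> 4 * (real M)\<^sup>2 / (real k - 1 + 2 * real M)\<^sup>2 *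
             ((1 - 1 / real M) * bregman f (arbk_d A b f blk M (\<lambda>_. 0) 0) (arbk_x A b f blk M (\<lambda>_. 0) 0) xhat
              + 1/2 * Bnorm_sq A blk M (arbk_y A b f blk M (\<lambda>_. 0) 0 - yhat))"
proof -
  interpret arbk_setting A b f blk M xhat yhat
    using rows_nonzero sc xhat_feas xhat_min M_pos blk_range blk_onto yhat_min
    by unfold_locales
  obtain k' where k': "k = Suc k'" using k by (cases k) auto
  have "1/2 * expect M k (\<lambda>s. (norm (arbk_x A b f blk M s k - xhat))\<^sup>2)
      \<le> expect M k (\<lambda>s. Psi (Y s k) - Psi yhat)"
    unfolding expect_cmult[symmetric] using norm_arbk_x_le_bregman
    by (intro expect_mono) (simp add: bregman_arbk_eq_Psi_gap)
  moreover have "expect M k (\<lambda>s. Psi (Y s k) - Psi yhat)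
      \<le> (2 / (real k' + 2 * real M))\<^sup>2 * ((real M)\<^sup>2 * ((1 - 1 / real M)
          * (Psi (Y (\<lambda>_. 0) 0) - Psi yhat) + 1/2 * Bnorm_sq A blk M (Y (\<lambda>_. 0) 0 - yhat)))"
    using expect_Psi_gap_le[of k' "\<lambda>_. 0"] unfolding lyapunov_0 k' .
  moreover have "(2 / (real k' + 2 * real M))\<^sup>2 * ((real M)\<^sup>2 * C)
      = 4 * (real M)\<^sup>2 / (real k - 1 + 2 * real M)\<^sup>2 * C" for C
    unfolding k' by (simp add: power_divide)
  ultimately show ?thesis
    unfolding bregman_arbk_eq_Psi_gap by simp
qed

end
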